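(* Consider the problem and algorithm AC2CD described in the context, let $\{x^k\}$ be a sequence produced by AC2CD, and assume $\lim_{k\to\infty}x^k=x^*$. Then there exists an outer iteration $k_z$ such that, for all $k\ge k_z$, \[ l_{j(k)}<z^{k,i}_{j(k)}<u_{j(k)},\quad i=1,\dots,n+1. \]
   Context: Problem: minimize $f(x)$ subject to $e^T x = b$ and $l_i \le x_i \le u_i$ ($i=1,\dots,n$), where $n\ge 2$, $e$ is the all-ones vector, $b\in\mathbb{R}$, $l_i\in\mathbb{R}\cup\{-\infty\}$, $u_i\in\mathbb{R}\cup\{+\infty\}$, $l_i<u_i$, and $f:\mathbb{R}^n\to\mathbb{R}$ is continuously differentiable with $\nabla f$ Lipschitz continuous on $\mathbb{R}^n$. $\mathcal F$ is the feasible set, $e_i$ the $i$th unit vector. For $x\in\mathcal F$, $D_h(x)=\min\{x_h-l_h,u_h-x_h\}$. Algorithm AC2CD with parameters $\tau\in(0,1]$, $\gamma,\delta\in(0,1)$, $0<A_l\le A_u<\infty$ and starting point $x^0\in\mathcal F$: for $k=0,1,2,\dots$: let $D^k=\max_h D_h(x^k)$; choose $j(k)$ with $D_{j(k)}(x^k)\ge\tau D^k$; choose a permutation $(p^k_1,\dots,p^k_n)$ of $\{1,\dots,n\}$; set $z^{k,1}=x^k$; for $i=1,\dots,n$ (inner iteration $(k,i)$): $g^{k,i}=\nabla_{j(k)}f(z^{k,i})-\nabla_{p^k_i}f(z^{k,i})$, $d^{k,i}=g^{k,i}(e_{p^k_i}-e_{j(k)})$; $\bar\alpha^{k,i}=\min\{u_{p^k_i}-z^{k,i}_{p^k_i},z^{k,i}_{j(k)}-l_{j(k)}\}/g^{k,i}$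 if $g^{k,i}>0$, $=\min\{z^{k,i}_{p^k_i}-l_{p^k_i},u_{j(k)}-z^{k,i}_{j(k)}\}/|g^{k,i}|$ if $g^{k,i}<0$, $=0$ if $g^{k,i}=0$; choose $A^{k,i}\in[A_l,A_u]$, set $\Delta^{k,i}=\min\{\bar\alpha^{k,i},A^{k,i}\}$; starting from $\alpha=\Delta^{k,i}$, while $f(z^{k,i}+\alpha d^{k,i})>f(z^{k,i})+\gamma\alpha\nabla f(z^{k,i})^Td^{k,i}$ replace $\alpha$ by $\delta\alpha$; $\alpha^{k,i}$ is the final $\alpha$ and $z^{k,i+1}=z^{k,i}+\alpha^{k,i}d^{k,i}$. Then $x^{k+1}=z^{k,n+1}$. Standing assumptions: $\mathcal L_0=\{x\in\mathcal F: f(x)\le f(x^0)\}$ is nonempty and compact, and every $x\in\mathcal L_0$ has some index $i$ with $l_i<x_i<u_i$. *)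

theory Defs
  imports "HOL-Analysis.Analysis" "HOL-Library.Extended_Real"
begin

text \<open>Vectors in R^n are modelled as real^'n with a finite index type 'n, n = CARD('n).
  Bounds are extended reals: l i \<in> R \<union> {-\<infinity>}, u i \<in> R \<union> {+\<infinity>}.\<close>

definition feasible :: "('n::finite \<Rightarrow> ereal) \<Rightarrow> ('n \<Rightarrow> ereal) \<Rightarrow> real \<Rightarrow> real^'n \<Rightarrow> bool" where
  "feasible l u b x \<longleftrightarrow> (\<Sum>i\<in>UNIV. x $ i) = b \<and> (\<forall>i. l i \<le> ereal (x $ i) \<and> ereal (x $ i) \<le> u i)"

definition Dh :: "('n::finite \<Rightarrow> ereal) \<Rightarrow> ('n \<Rightarrow> ereal) \<Rightarrow> real^'n \<Rightarrow> 'n \<Rightarrow> ereal" where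
  "Dh l u x h = min (ereal (x $ h) - l h) (u h - ereal (x $ h))"

definition Dmax :: "('n::finite \<Rightarrow> ereal) \<Rightarrow> ('n \<Rightarrow> ereal) \<Rightarrow> real^'n \<Rightarrow> ereal" where
  "Dmax l u x = Max (range (Dh l u x))"

definition alpha_bar :: "('n::finite \<Rightarrow> ereal) \<Rightarrow> ('n \<Rightarrow> ereal) \<Rightarrow> real^'n \<Rightarrow> 'n \<Rightarrow> 'n \<Rightarrow> real \<Rightarrow> ereal" where
  "alpha_bar l u z jj pp g =
     (if g > 0 then min (u pp - ereal (z $ pp)) (ereal (z $ jj) - l jj) / ereal g
      else if g < 0 then min (ereal (z $ pp) - l pp) (u jj - ereal (z $ jj)) / ereal \<bar>g\<bar>
      else 0)"

definition armijo :: "(real^'n \<Rightarrow> real) \<Rightarrow> (real^'n \<Rightarrow> real^'n) \<Rightarrow> real \<Rightarrow> real^'n \<Rightarrow> real^'n \<Rightarrow> real \<Rightarrow> bool" where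
  "armijo f gradf \<gamma> z d a \<longleftrightarrow> \<not> (f (z + a *\<^sub>R d) > f z + \<gamma> * a * (gradf z \<bullet> d))"

text \<open>One run of AC2CD: x outer iterates, z k i inner iterates (i = 1..n+1), jj k the index j(k),
  p k i the permutation p^k_i (i = 1..n), A k i the trial steps A^{k,i}, alpha k i the accepted steps.
  The backtracking loop yields alpha = delta^m * Delta with m the least exponent satisfying Armijo.\<close>

definition ac2cd ::
  "(real^'n::finite \<Rightarrow> real) \<Rightarrow> (real^'n \<Rightarrow> real^'n) \<Rightarrow> ('n \<Rightarrow> ereal) \<Rightarrow> ('n \<Rightarrow> ereal) \<Rightarrow> real \<Rightarrow>
   real \<Rightarrow> real \<Rightarrow> real \<Rightarrow> real \<Rightarrow> real \<Rightarrow>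
   (nat \<Rightarrow> real^'n) \<Rightarrow> (nat \<Rightarrow> nat \<Rightarrow> real^'n) \<Rightarrow> (nat \<Rightarrow> 'n) \<Rightarrow> (nat \<Rightarrow> nat \<Rightarrow> 'n) \<Rightarrow>
   (nat \<Rightarrow> nat \<Rightarrow> real) \<Rightarrow> (nat \<Rightarrow> nat \<Rightarrow> real) \<Rightarrow> bool" where
  "ac2cd f gradf l u b \<tau> \<gamma> \<delta> Al Au x z jj p A alpha \<longleftrightarrow>
     feasible l u b (x 0) \<and>
     (\<forall>k. Dh l u (x k) (jj k) \<ge> ereal \<tau> * Dmax l u (x k) \<and>
          bij_betw (p k) {1..CARD('n)} UNIV \<and>
          z k 1 = x k \<and>
          x (Suc k) = z k (CARD('n) + 1) \<and>
          (\<forall>i\<in>{1..CARD('n)}.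
             let zi = z k i; pp = p k i; jk = jj k;
                 g = gradf zi $ jk - gradf zi $ pp;
                 d = g *\<^sub>R (axis pp 1 - axis jk 1);
                 \<Delta> = real_of_ereal (min (alpha_bar l u zi jk pp g) (ereal (A k i)))
             in A k i \<in> {Al..Au} \<and>
                (\<exists>m::nat. alpha k i = \<delta> ^ m * \<Delta> \<and> armijo f gradf \<gamma> zi d (\<delta> ^ m * \<Delta>) \<and>
                          (\<forall>m'<m. \<not> armijo f gradf \<gamma> zi d (\<delta> ^ m' * \<Delta>))) \<and>
                z k (Suc i) = zi + alpha k i *\<^sub>R d))"

end

theory Submission
  imports Defs
begin

text \<open>
  Each inner step moves along e_p - e_j by at most the largest feasible step, and the Armijo
  condition makes it a descent step. Hence all iterates lie in the level set L0, and so does the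
  limit x*, which therefore has a coordinate strictly inside its bounds. Near x* this coordinate
  keeps a fixed distance from its bounds, so the choice rule D_j(k)(x^k) \<ge> \<tau> D^k gives the pivot
  coordinate j(k) a uniform margin \<eta>. Since p^k is a permutation, every other coordinate is moved
  once per outer iteration, by its total change in x^(k+1) - x^k; the pivot absorbs these moves and
  so drifts by at most n |x^(k+1) - x^k|, which tends to 0.
\<close>

lemma ereal_add_le_iff_le_minus: "ereal (r + t) \<le> c \<longleftrightarrow> ereal t \<le> c - ereal r"
  by (cases c) auto

lemma ereal_le_minus_iff_le_diff: "c \<le> ereal (r - t) \<longleftrightarrow> ereal t \<le> ereal r - c"
  by (cases c) auto

lemma ereal_real_of_ereal_min:
  assumes "0 \<le> a" "0 \<le> c"
  shows "ereal (real_of_ereal (min a (ereal c))) = min a (ereal c)"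
  using assms by (cases a) (auto simp: min_def)

lemma ereal_le_Dh_iff:
  "ereal e \<le> Dh l u y h \<longleftrightarrow> l h \<le> ereal (y $ h - e) \<and> ereal (y $ h + e) \<le> u h"
  unfolding Dh_def by (cases "l h"; cases "u h") auto

lemma bounds_strict_of_Dh_margin:
  assumes "ereal \<eta> \<le> Dh l u y h" "\<bar>r - y $ h\<bar> < \<eta>"
  shows "l h < ereal r \<and> ereal r < u h"
proof -
  have "l h \<le> ereal (y $ h - \<eta>)" "ereal (y $ h + \<eta>) \<le> u h"
    using assms(1) by (simp_all add: ereal_le_Dh_iff)
  moreover have "ereal (y $ h - \<eta>) < ereal r" "ereal r < ereal (y $ h + \<eta>)"
    using assms(2) by auto
  ultimately show ?thesis
    by (meson le_less_trans less_le_trans)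
qed

lemma Dh_le_Dmax: "Dh l u y h \<le> Dmax l u y"
  unfolding Dmax_def by (rule Max_ge) auto

lemma closed_feasible: "closed {y. feasible l u b y}"
proof -
  have "{y. feasible l u b y} = {y. (\<Sum>i\<in>UNIV. y $ i) = b} \<inter>
      (\<Inter>i. {y. l i \<le> ereal (y $ i)} \<inter> {y. ereal (y $ i) \<le> u i})"
    unfolding feasible_def by auto
  moreover have "closed {y::real^'a. (\<Sum>i\<in>UNIV. y $ i) = b}"
    by (intro closed_Collect_eq continuous_intros)
  moreover have "closed {y::real^'a. l i \<le> ereal (y $ i)}" "closed {y::real^'a. ereal (y $ i) \<le> u i}" for i
    by (intro closed_Collect_le continuous_on_ereal continuous_intros)+
  ultimately show ?thesis
    by (simp only:) (intro closed_Int closed_INT ballI)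
qed

lemma feasible_add_transfer:
  assumes y: "feasible l u b y" and "p \<noteq> j" "0 \<le> t"
    and up: "ereal t \<le> u p - ereal (y $ p)" and low: "ereal t \<le> ereal (y $ j) - l j"
  shows "feasible l u b (y + t *\<^sub>R (axis p 1 - axis j 1))"
proof -
  define y' where "y' = y + t *\<^sub>R (axis p 1 - axis j 1)"
  have y'_nth: "y' $ i = (if i = p then y $ i + t else if i = j then y $ i - t else y $ i)" for i
    using \<open>p \<noteq> j\<close> by (simp add: y'_def axis_def)
  have "(\<Sum>i\<in>UNIV. y' $ i) = (\<Sum>i\<in>UNIV. y $ i) + t * (\<Sum>i\<in>UNIV. axis p 1 $ i) - t * (\<Sum>i\<in>UNIV. axis j 1 $ i)"
    by (simp add: y'_def sum.distrib sum_subtractf sum_distrib_left algebra_simps)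
  then have "(\<Sum>i\<in>UNIV. y' $ i) = (\<Sum>i\<in>UNIV. y $ i)"
    by (simp add: axis_def)
  moreover have "l i \<le> ereal (y' $ i) \<and> ereal (y' $ i) \<le> u i" for i
  proof -
    have yi: "l i \<le> ereal (y $ i)" "ereal (y $ i) \<le> u i"
      using y by (auto simp: feasible_def)
    have "l i \<le> ereal (y $ i + t)" "ereal (y $ i - t) \<le> u i"
      using yi \<open>0 \<le> t\<close> by (auto intro: order_trans[of _ "ereal (y $ i)"])
    moreover have "i = p \<Longrightarrow> ereal (y $ i + t) \<le> u i" "i = j \<Longrightarrow> l i \<le> ereal (y $ i - t)"
      using up low by (simp_all add: ereal_add_le_iff_le_minus ereal_le_minus_iff_le_diff)
    ultimately show ?thesis
      using yi by (auto simp: y'_nth)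
  qed
  ultimately show ?thesis
    using y by (simp add: y'_def[symmetric] feasible_def)
qed

lemma alpha_bar_nonneg:
  assumes "feasible l u b y"
  shows "0 \<le> alpha_bar l u y j p g"
proof -
  have "0 \<le> ereal (y $ i) - l i" "0 \<le> u i - ereal (y $ i)" for i
    using assms unfolding feasible_def by (simp_all add: ereal_diff_positive)
  then show ?thesis
    unfolding alpha_bar_def by auto
qed

lemma alpha_bar_neg: "g < 0 \<Longrightarrow> alpha_bar l u y j p g = alpha_bar l u y p j (- g)"
  unfolding alpha_bar_def by (simp add: min.commute)

lemma feasible_transfer_step:
  assumes "feasible l u b y" "0 \<le> a" "ereal a \<le> alpha_bar l u y j p g"
  shows "feasible l u b (y + (a * g) *\<^sub>R (axis p 1 - axis j 1))"
proof -
  have pos: "feasible l u b (y + (a * g) *\<^sub>R (axis p 1 - axis j 1))"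
    if "ereal a \<le> alpha_bar l u y j p g" "0 < g" for p j g
  proof (cases "p = j")
    case True
    then show ?thesis using assms(1) by simp
  next
    case False
    have "ereal (a * g) \<le> min (u p - ereal (y $ p)) (ereal (y $ j) - l j)"
      using that ereal_le_divide_pos[of "ereal g"] by (simp add: alpha_bar_def mult.commute)
    then show ?thesis
      using feasible_add_transfer[OF assms(1) False] assms(2) \<open>0 < g\<close> by simp
  qed
  consider "g = 0" | "0 < g" | "g < 0" by linarith
  then show ?thesis
  proof cases
    case 1
    then show ?thesis using assms(1) by simp
  next
    case 2
    then show ?thesis using pos assms(3) by blast
  next
    case 3
    have "feasible l u b (y + (a * - g) *\<^sub>R (axis j 1 - axis p 1))"
      by (rule pos) (use assms(3) 3 in \<open>simp_all add: alpha_bar_neg\<close>)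
    moreover have "(a * - g) *\<^sub>R (axis j 1 - axis p 1) = (a * g) *\<^sub>R (axis p 1 - axis j 1)"
      by (simp add: algebra_simps)
    ultimately show ?thesis by metis
  qed
qed

lemma inner_transfer_direction:
  "v \<bullet> (g *\<^sub>R (axis p 1 - axis j 1)) = g * (v $ p - v $ j)"
  by (simp add: inner_diff_right inner_axis)

lemma armijo_nonincreasing:
  assumes "armijo f gradf \<gamma> y d a" "0 \<le> \<gamma>" "0 \<le> a" "gradf y \<bullet> d \<le> 0"
  shows "f (y + a *\<^sub>R d) \<le> f y"
proof -
  have "\<gamma> * a * (gradf y \<bullet> d) \<le> 0"
    using assms(2-4) by (simp add: mult_nonneg_nonpos)
  then show ?thesis using assms(1) unfolding armijo_def by linarith
qed

lemma transfer_iterates_eq_sum: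
  fixes y :: "nat \<Rightarrow> real^'n::finite"
  assumes step: "\<forall>i\<in>{1..n}. y (Suc i) = y i + c i *\<^sub>R (axis (P i) 1 - axis j 1)"
    and m: "m \<in> {1..n + 1}"
  shows "y m = y 1 + (\<Sum>i\<in>{1..<m}. c i *\<^sub>R (axis (P i) 1 - axis j 1))"
proof -
  from m have "1 \<le> m" "m \<le> n + 1" by auto
  then show ?thesis
    by (induction m rule: dec_induct) (auto simp: step)
qed

lemma transfer_iterates_pivot_drift:
  fixes y :: "nat \<Rightarrow> real^'n::finite"
  assumes step: "\<forall>i\<in>{1..n}. y (Suc i) = y i + c i *\<^sub>R (axis (P i) 1 - axis j 1)"
    and inj: "inj_on P {1..n}" and m: "m \<in> {1..n + 1}"
  shows "\<bar>y m $ j - y 1 $ j\<bar> \<le> real n * norm (y (n + 1) - y 1)"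
proof -
  have nth_diff: "y m' $ q - y 1 $ q = (\<Sum>i\<in>{1..<m'}. c i * (of_bool (q = P i) - of_bool (q = j)))"
    if "m' \<in> {1..n + 1}" for m' q
    using transfer_iterates_eq_sum[OF step that] by (simp add: sum_component axis_def of_bool_def)
  have moved: "\<bar>c i\<bar> \<le> norm (y (n + 1) - y 1)" if i: "i \<in> {1..n}" and "j \<noteq> P i" for i
  proof -
    have "(y (n + 1) - y 1) $ P i = (\<Sum>i'\<in>{1..n}. c i' * of_bool (i = i'))"
    proof -
      have "{1..<n + 1} = {1..n}" by auto
      moreover have "of_bool (P i = P i') = (of_bool (i = i') :: real)" if "i' \<in> {1..n}" for i'
        using inj_on_eq_iff[OF inj i that] by simp
      ultimately show ?thesis
        using nth_diff[of "n + 1" "P i"] \<open>j \<noteq> P i\<close> by simp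
    qed
    also have "\<dots> = c i" using i by simp
    finally show ?thesis by (metis component_le_norm_cart)
  qed
  have "\<bar>y m $ j - y 1 $ j\<bar> = \<bar>\<Sum>i\<in>{1..<m}. c i * (of_bool (j = P i) - 1)\<bar>"
    using nth_diff[OF m] by simp
  also have "\<dots> \<le> (\<Sum>i\<in>{1..<m}. \<bar>c i * (of_bool (j = P i) - 1)\<bar>)"
    by (rule sum_abs)
  also have "\<dots> \<le> (\<Sum>i\<in>{1..<m}. norm (y (n + 1) - y 1))"
  proof (rule sum_mono)
    fix i assume "i \<in> {1..<m}"
    then have "i \<in> {1..n}" using m by auto
    then show "\<bar>c i * (of_bool (j = P i) - 1)\<bar> \<le> norm (y (n + 1) - y 1)"
      using moved by (cases "j = P i") auto
  qed
  also have "\<dots> \<le> real n * norm (y (n + 1) - y 1)"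
    using m by (simp add: mult_right_mono)
  finally show ?thesis .
qed

lemma ac2cd_inner_update:
  fixes z :: "nat \<Rightarrow> nat \<Rightarrow> real^'n::finite"
  assumes "ac2cd f gradf l u b \<tau> \<gamma> \<delta> Al Au x z jj p A alpha" "i \<in> {1..CARD('n)}"
  shows "z k (Suc i) = z k i + (alpha k i * (gradf (z k i) $ jj k - gradf (z k i) $ p k i)) *\<^sub>R
           (axis (p k i) 1 - axis (jj k) 1)"
  using assms unfolding ac2cd_def Let_def by auto

lemma ac2cd_inner_step_descent:
  fixes z :: "nat \<Rightarrow> nat \<Rightarrow> real^'n::finite"
  assumes run: "ac2cd f gradf l u b \<tau> \<gamma> \<delta> Al Au x z jj p A alpha"
    and params: "0 \<le> \<gamma>" "0 \<le> \<delta>" "\<delta> \<le> 1" "0 \<le> Al"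
    and i: "i \<in> {1..CARD('n)}" and feas: "feasible l u b (z k i)"
  shows "feasible l u b (z k (Suc i)) \<and> f (z k (Suc i)) \<le> f (z k i)"
proof -
  define g where "g = gradf (z k i) $ jj k - gradf (z k i) $ p k i"
  define d where "d = g *\<^sub>R (axis (p k i) 1 - axis (jj k) (1::real))"
  define \<alpha>bar where "\<alpha>bar = alpha_bar l u (z k i) (jj k) (p k i) g"
  define \<Delta> where "\<Delta> = real_of_ereal (min \<alpha>bar (ereal (A k i)))"
  have "A k i \<in> {Al..Au} \<and>
      (\<exists>m::nat. alpha k i = \<delta> ^ m * \<Delta> \<and> armijo f gradf \<gamma> (z k i) d (\<delta> ^ m * \<Delta>) \<and>
        (\<forall>m'<m. \<not> armijo f gradf \<gamma> (z k i) d (\<delta> ^ m' * \<Delta>))) \<and>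
      z k (Suc i) = z k i + alpha k i *\<^sub>R d"
    using run i unfolding ac2cd_def Let_def g_def d_def \<Delta>_def \<alpha>bar_def by blast
  then obtain m where A: "Al \<le> A k i" and alpha: "alpha k i = \<delta> ^ m * \<Delta>"
    and arm: "armijo f gradf \<gamma> (z k i) d (alpha k i)"
    and upd: "z k (Suc i) = z k i + alpha k i *\<^sub>R d"
    by auto
  have "ereal \<Delta> = min \<alpha>bar (ereal (A k i))"
    unfolding \<Delta>_def \<alpha>bar_def
    using ereal_real_of_ereal_min alpha_bar_nonneg[OF feas] A params(4) by simp
  then have "0 \<le> ereal \<Delta>" "ereal \<Delta> \<le> \<alpha>bar"
    using alpha_bar_nonneg[OF feas] A params(4) unfolding \<alpha>bar_def by auto
  then have "0 \<le> \<Delta>" "ereal \<Delta> \<le> \<alpha>bar"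
    by simp_all
  moreover have "\<delta> ^ m \<le> 1" "0 \<le> \<delta> ^ m"
    using params(2,3) by (simp_all add: power_le_one)
  ultimately have step: "0 \<le> alpha k i" "ereal (alpha k i) \<le> \<alpha>bar"
    unfolding alpha by (auto simp: mult_left_le_one_le intro: order_trans[rotated])
  have "feasible l u b (z k (Suc i))"
    using feasible_transfer_step[OF feas step[unfolded \<alpha>bar_def]] by (simp add: upd d_def)
  moreover have "gradf (z k i) \<bullet> d = - g\<^sup>2"
    unfolding d_def inner_transfer_direction g_def by (simp add: power2_eq_square algebra_simps)
  then have "f (z k (Suc i)) \<le> f (z k i)"
    using armijo_nonincreasing[OF arm params(1) step(1)] by (simp add: upd)
  ultimately show ?thesis ..
qed

lemma ac2cd_inner_iterates_descent:
  fixes z :: "nat \<Rightarrow> nat \<Rightarrow> real^'n::finite"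
  assumes run: "ac2cd f gradf l u b \<tau> \<gamma> \<delta> Al Au x z jj p A alpha"
    and params: "0 \<le> \<gamma>" "0 \<le> \<delta>" "\<delta> \<le> 1" "0 \<le> Al"
    and feas: "feasible l u b (x k)" and i: "i \<in> {1..CARD('n) + 1}"
  shows "feasible l u b (z k i) \<and> f (z k i) \<le> f (x k)"
proof -
  from i have "1 \<le> i" "i \<le> CARD('n) + 1" by auto
  then show ?thesis
  proof (induction i rule: dec_induct)
    case base
    then show ?case using run feas by (simp add: ac2cd_def)
  next
    case (step m)
    then show ?case
      using ac2cd_inner_step_descent[OF run params, of m k] by force
  qed
qed

lemma ac2cd_iterates_descent:
  fixes z :: "nat \<Rightarrow> nat \<Rightarrow> real^'n::finite"
  assumes run: "ac2cd f gradf l u b \<tau> \<gamma> \<delta> Al Au x z jj p A alpha"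
    and params: "0 \<le> \<gamma>" "0 \<le> \<delta>" "\<delta> \<le> 1" "0 \<le> Al"
  shows "feasible l u b (x k) \<and> f (x k) \<le> f (x 0)"
proof (induction k)
  case 0
  then show ?case using run by (simp add: ac2cd_def)
next
  case (Suc k)
  have "x (Suc k) = z k (CARD('n) + 1)"
    using run by (simp add: ac2cd_def)
  then show ?case
    using ac2cd_inner_iterates_descent[OF run params, of k "CARD('n) + 1"] Suc by auto
qed

lemma ac2cd_pivot_drift:
  fixes z :: "nat \<Rightarrow> nat \<Rightarrow> real^'n::finite"
  assumes run: "ac2cd f gradf l u b \<tau> \<gamma> \<delta> Al Au x z jj p A alpha"
    and i: "i \<in> {1..CARD('n) + 1}"
  shows "\<bar>z k i $ jj k - x k $ jj k\<bar> \<le> real CARD('n) * norm (x (Suc k) - x k)"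
proof -
  have ends: "z k 1 = x k" "z k (CARD('n) + 1) = x (Suc k)"
    and inj: "inj_on (p k) {1..CARD('n)}"
    using run by (auto simp: ac2cd_def bij_betw_def)
  define c where "c i = alpha k i * (gradf (z k i) $ jj k - gradf (z k i) $ p k i)" for i
  have "\<forall>i\<in>{1..CARD('n)}. z k (Suc i) = z k i + c i *\<^sub>R (axis (p k i) 1 - axis (jj k) 1)"
    using ac2cd_inner_update[OF run] unfolding c_def by blast
  from transfer_iterates_pivot_drift[OF this inj i] show ?thesis
    unfolding ends .
qed

lemma eventually_Dh_margin:
  fixes x :: "nat \<Rightarrow> real^'n::finite"
  assumes conv: "x \<longlonglongrightarrow> xstar" and interior: "l i < ereal (xstar $ i)" "ereal (xstar $ i) < u i"
  shows "\<exists>e>0. \<forall>\<^sub>F k in sequentially. ereal e \<le> Dh l u (x k) i"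
proof -
  have "0 < Dh l u xstar i"
    using interior unfolding Dh_def by (cases "l i"; cases "u i") auto
  then obtain e where "0 < e" "ereal e \<le> Dh l u xstar i"
    using ereal_dense2 by (metis ereal_less(2) less_imp_le)
  then have star: "l i \<le> ereal (xstar $ i - e)" "ereal (xstar $ i + e) \<le> u i"
    by (simp_all add: ereal_le_Dh_iff)
  have "\<forall>\<^sub>F k in sequentially. dist (x k $ i) (xstar $ i) < e / 2"
    by (rule tendstoD[OF tendsto_vec_nth[OF conv]]) (use \<open>0 < e\<close> in simp)
  then have "\<forall>\<^sub>F k in sequentially. ereal (e / 2) \<le> Dh l u (x k) i"
  proof eventually_elim
    case (elim k)
    then have "ereal (xstar $ i - e) \<le> ereal (x k $ i - e / 2)"
      "ereal (x k $ i + e / 2) \<le> ereal (xstar $ i + e)"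
      unfolding dist_real_def abs_diff_less_iff by simp_all
    then show ?case
      unfolding ereal_le_Dh_iff using order_trans[OF star(1)] order_trans[OF _ star(2)] by blast
  qed
  then show ?thesis
    using \<open>0 < e\<close> by (intro exI[of _ "e / 2"]) auto
qed

lemma ac2cd_limit_in_level_set:
  fixes z :: "nat \<Rightarrow> nat \<Rightarrow> real^'n::finite"
  assumes run: "ac2cd f gradf l u b \<tau> \<gamma> \<delta> Al Au x z jj p A alpha"
    and params: "0 \<le> \<gamma>" "0 \<le> \<delta>" "\<delta> \<le> 1" "0 \<le> Al"
    and deriv: "\<forall>y. (f has_derivative (\<lambda>h. gradf y \<bullet> h)) (at y)"
    and conv: "x \<longlonglongrightarrow> xstar"
  shows "feasible l u b xstar \<and> f xstar \<le> f (x 0)"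
proof
  have level: "feasible l u b (x k) \<and> f (x k) \<le> f (x 0)" for k
    using ac2cd_iterates_descent[OF run params] .
  show "feasible l u b xstar"
    using closed_sequentially[OF closed_feasible] level conv by blast
  have "isCont f xstar"
    using deriv has_derivative_continuous by blast
  then have "(\<lambda>k. f (x k)) \<longlonglongrightarrow> f xstar"
    using conv isCont_tendsto_compose by blast
  then show "f xstar \<le> f (x 0)"
    using level LIMSEQ_le_const2 by blast
qed

lemma ac2cd_pivot_margin:
  fixes z :: "nat \<Rightarrow> nat \<Rightarrow> real^'n::finite"
  assumes run: "ac2cd f gradf l u b \<tau> \<gamma> \<delta> Al Au x z jj p A alpha"
    and params: "0 < \<tau>" "0 \<le> \<gamma>" "0 \<le> \<delta>" "\<delta> \<le> 1" "0 \<le> Al"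
    and deriv: "\<forall>y. (f has_derivative (\<lambda>h. gradf y \<bullet> h)) (at y)"
    and L0_interior: "\<forall>y. feasible l u b y \<and> f y \<le> f (x 0) \<longrightarrow>
                         (\<exists>i. l i < ereal (y $ i) \<and> ereal (y $ i) < u i)"
    and conv: "x \<longlonglongrightarrow> xstar"
  shows "\<exists>\<eta>>0. \<forall>\<^sub>F k in sequentially. ereal \<eta> \<le> Dh l u (x k) (jj k)"
proof -
  obtain i where "l i < ereal (xstar $ i)" "ereal (xstar $ i) < u i"
    using L0_interior ac2cd_limit_in_level_set[OF run params(2-) deriv conv] by blast
  then obtain e where "0 < e" and margin: "\<forall>\<^sub>F k in sequentially. ereal e \<le> Dh l u (x k) i"
    using eventually_Dh_margin[OF conv] by blast
  from margin have "\<forall>\<^sub>F k in sequentially. ereal (\<tau> * e) \<le> Dh l u (x k) (jj k)"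
  proof eventually_elim
    case (elim k)
    then have "ereal \<tau> * ereal e \<le> ereal \<tau> * Dmax l u (x k)"
      using order_trans[OF _ Dh_le_Dmax] params(1) by (intro ereal_mult_left_mono) auto
    also have "\<dots> \<le> Dh l u (x k) (jj k)"
      using run by (simp add: ac2cd_def)
    finally show ?case by simp
  qed
  then show ?thesis
    using params(1) \<open>0 < e\<close> by (intro exI[of _ "\<tau> * e"]) auto
qed

theorem proposition2:
  fixes f :: "real^'n::finite \<Rightarrow> real" and gradf :: "real^'n \<Rightarrow> real^'n"
    and l u :: "'n \<Rightarrow> ereal" and b \<tau> \<gamma> \<delta> Al Au :: real
    and x :: "nat \<Rightarrow> real^'n" and z :: "nat \<Rightarrow> nat \<Rightarrow> real^'n"
    and jj :: "nat \<Rightarrow> 'n" and p :: "nat \<Rightarrow> nat \<Rightarrow> 'n" and A alpha :: "nat \<Rightarrow> nat \<Rightarrow> real"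
    and xstar :: "real^'n"
  assumes n2: "CARD('n) \<ge> 2"
    and bounds: "\<forall>i. l i \<noteq> \<infinity> \<and> u i \<noteq> -\<infinity> \<and> l i < u i"
    and deriv: "\<forall>y. (f has_derivative (\<lambda>h. gradf y \<bullet> h)) (at y)"
    and cont: "continuous_on UNIV gradf"
    and lipschitz: "\<exists>L. \<forall>y w. norm (gradf y - gradf w) \<le> L * norm (y - w)"
    and params: "0 < \<tau> \<and> \<tau> \<le> 1 \<and> 0 < \<gamma> \<and> \<gamma> < 1 \<and> 0 < \<delta> \<and> \<delta> < 1 \<and> 0 < Al \<and> Al \<le> Au"
    and L0: "{y. feasible l u b y \<and> f y \<le> f (x 0)} \<noteq> {} \<and> compact {y. feasible l u b y \<and> f y \<le> f (x 0)}"
    and L0_interior: "\<forall>y. feasible l u b y \<and> f y \<le> f (x 0) \<longrightarrow> (\<exists>i. l i < ereal (y $ i) \<and> ereal (y $ i) < u i)"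
    and run: "ac2cd f gradf l u b \<tau> \<gamma> \<delta> Al Au x z jj p A alpha"
    and conv: "x \<longlonglongrightarrow> xstar"
  shows "\<exists>kz. \<forall>k\<ge>kz. \<forall>i\<in>{1..CARD('n)+1}.
           l (jj k) < ereal (z k i $ jj k) \<and> ereal (z k i $ jj k) < u (jj k)"
proof -
  have "0 < \<tau>" "0 \<le> \<gamma>" "0 \<le> \<delta>" "\<delta> \<le> 1" "0 \<le> Al"
    using params by auto
  then obtain \<eta> where "0 < \<eta>" and margin: "\<forall>\<^sub>F k in sequentially. ereal \<eta> \<le> Dh l u (x k) (jj k)"
    using ac2cd_pivot_margin[OF run _ _ _ _ _ deriv L0_interior conv] by blast
  have lim: "(\<lambda>k. real CARD('n) * norm (x (Suc k) - x k)) \<longlonglongrightarrow> real CARD('n) * norm (xstar - xstar)"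
    by (intro tendsto_intros LIMSEQ_Suc conv)
  have "\<forall>\<^sub>F k in sequentially. real CARD('n) * norm (x (Suc k) - x k) < \<eta>"
    using order_tendstoD(2)[OF lim] \<open>0 < \<eta>\<close> by simp
  from eventually_conj[OF margin this] obtain kz where kz: "\<And>k. kz \<le> k \<Longrightarrow>
      ereal \<eta> \<le> Dh l u (x k) (jj k) \<and> real CARD('n) * norm (x (Suc k) - x k) < \<eta>"
    unfolding eventually_sequentially by blast
  show ?thesis
  proof (intro exI allI impI ballI)
    fix k i assume k: "kz \<le> k" and i: "i \<in> {1..CARD('n) + 1}"
    have "\<bar>z k i $ jj k - x k $ jj k\<bar> < \<eta>"
      using ac2cd_pivot_drift[OF run i, of k] kz[OF k] by linarith
    then show "l (jj k) < ereal (z k i $ jj k) \<and> ereal (z k i $ jj k) < u (jj k)"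
      using bounds_strict_of_Dh_margin kz[OF k] by blast
  qed
qed

end
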